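(* Let $I$ (inputs) and $O$ (outputs) be disjoint finite sets and let $\Phi_{\mathrm{CTL}^*}$ be a CTL* state formula in positive normal form over $I$ and $O$. Let $F_{\mathit{exist}}$ (resp. $F_{\mathit{univ}}$) be the set of subformulas of $\Phi_{\mathrm{CTL}^*}$ of the form $\mathsf E\varphi$ (resp. $\mathsf A\varphi$). For each $\mathsf E\varphi\in F_{\mathit{exist}}$ fix a nondeterministic B\"uchi word automaton for $\varphi$ (where state subformulas of $\varphi$ are treated as atomic propositions) with state set $Q_\varphi$, and let $k=\sum_{\mathsf E\varphi\in F_{\mathit{exist}}}|Q_\varphi|$. Introduce new outputs: for each $\mathsf E\varphi\in F_{\mathit{exist}}$ an output $v_{\mathsf E\varphi}$ ranging over $\{0,\dots,k\}$; for each $\mathsf A\varphi\in F_{\mathit{univ}}$ a Boolean output $p_{\mathsf A\varphi}$; and for each $j\in\{1,\dots,k\}$ an output $d_j$ ranging over $2^I$, where the proposition $d_j$ holds at a position iff the current input equals the current value of $d_j$. For a formula $\psi$ let $\psi'$ be obtained by replacing every maximal subformula $\mathsf E\chi$ by $v_{\mathsf E\chi}\neq0$ and every maximal subformula $\mathsf A\chi$ by $p_{\mathsf A\chi}$. Define the LTL formula $$\Phi_{\mathrm{LTL}}=\Phi'_{\mathrm{CTL}^*}\wedge\bigwedge_{\mathsf E\varphi\in F_{\mathit{exist}}}\ \bigwedge_{j=1}^{k}\mathsf G\big[v_{\mathsf E\varphi}=j\rightarrow(\mathsf G d_j\rightarrow\varphi')\big]\wedge\bigwedge_{\mathsf A\varphi\in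 F_{\mathit{univ}}}\mathsf G\big[p_{\mathsf A\varphi}\rightarrow\varphi'\big].$$ Then $\Phi_{\mathrm{CTL}^*}$ is realisable (with inputs $I$ and outputs $O$) if and only if $\Phi_{\mathrm{LTL}}$ is realisable (with inputs $I$ and outputs $O$ together with all new outputs).
   Context: A Moore system $(I,O,T,t_0,\tau,\mathit{out})$ has finite states $T$, initial state $t_0$, total transition function $\tau:T\times 2^I\to T$ and output labelling $\mathit{out}:T\to 2^O$. Its computations are words $(\mathit{out}(t_1)\cup e_1)(\mathit{out}(t_2)\cup e_2)\dots$ with $t_1=t_0$, $e_j\in 2^I$, $t_{j+1}=\tau(t_j,e_j)$; its computation tree has nodes $(2^I)^*$ with node $w$ labelled $\mathit{out}(\tau(t_0,w))$. A specification is realisable if some Moore system with the given inputs and outputs satisfies it: for an LTL formula, all computations satisfy it; for a CTL* formula, its computation tree satisfies it at the root. CTL* with inputs in positive normal form: state formulas are $\mathit{true},\mathit{false}$, outputs and negated outputs, $\wedge,\vee$ of state formulas, and $\mathsf A\varphi,\mathsf E\varphi$; path formulas are state formulas, inputs and negated inputs, $\wedge,\vee,\mathsf X,\mathsf U,\mathsf R$ of path formulas; on a tree path $n_1n_2\dots$ with $n_2=n_1\cdot e$ an input $i$ holds iff $i\in e$, and the rest of the semantics is standard. *)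

theory Defs
  imports Main
begin

text \<open>A single formula datatype; 'state formulas' are characterised by is_state.
  Out/NOut are (negated) outputs, In/NIn are (negated) inputs.\<close>
datatype 'a ctl =
    TT | FF
  | Out 'a | NOut 'a
  | In 'a | NIn 'a
  | And "'a ctl" "'a ctl" | Or "'a ctl" "'a ctl"
  | A "'a ctl" | E "'a ctl"
  | X "'a ctl" | U "'a ctl" "'a ctl" | R "'a ctl" "'a ctl"

primrec is_state :: "'a ctl \<Rightarrow> bool" where
  "is_state TT = True"
| "is_state FF = True"
| "is_state (Out a) = True"
| "is_state (NOut a) = True"
| "is_state (In a) = False"
| "is_state (NIn a) = False"
| "is_state (And f g) = (is_state f \<and> is_state g)"
| "is_state (Or f g) = (is_state f \<and> is_state g)"
| "is_state (A f) = True"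
| "is_state (E f) = True"
| "is_state (X f) = False"
| "is_state (U f g) = False"
| "is_state (R f g) = False"

primrec over :: "'a set \<Rightarrow> 'a set \<Rightarrow> 'a ctl \<Rightarrow> bool" where
  "over Ins Outs TT = True"
| "over Ins Outs FF = True"
| "over Ins Outs (Out a) = (a \<in> Outs)"
| "over Ins Outs (NOut a) = (a \<in> Outs)"
| "over Ins Outs (In a) = (a \<in> Ins)"
| "over Ins Outs (NIn a) = (a \<in> Ins)"
| "over Ins Outs (And f g) = (over Ins Outs f \<and> over Ins Outs g)"
| "over Ins Outs (Or f g) = (over Ins Outs f \<and> over Ins Outs g)"
| "over Ins Outs (A f) = over Ins Outs f"
| "over Ins Outs (E f) = over Ins Outs f"
| "over Ins Outs (X f) = over Ins Outs f"
| "over Ins Outs (U f g) = (over Ins Outs f \<and> over Ins Outs g)"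
| "over Ins Outs (R f g) = (over Ins Outs f \<and> over Ins Outs g)"

text \<open>Semantics on a tree with node labels L (nodes are lists of input sets).
  csem I L f w e: f holds on the path starting at node w that follows the inputs e 0, e 1, ...
  (i.e. the path w, w@[e 0], w@[e 0,e 1], ...).  For state formulas only w matters.\<close>
primrec csem :: "'a set \<Rightarrow> ('a set list \<Rightarrow> 'a set) \<Rightarrow> 'a ctl \<Rightarrow> 'a set list \<Rightarrow> (nat \<Rightarrow> 'a set) \<Rightarrow> bool" where
  "csem Ins L TT w e = True"
| "csem Ins L FF w e = False"
| "csem Ins L (Out a) w e = (a \<in> L w)"
| "csem Ins L (NOut a) w e = (a \<notin> L w)"
| "csem Ins L (In a) w e = (a \<in> e 0)"
| "csem Ins L (NIn a) w e = (a \<notin> e 0)"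
| "csem Ins L (And f g) w e = (csem Ins L f w e \<and> csem Ins L g w e)"
| "csem Ins L (Or f g) w e = (csem Ins L f w e \<or> csem Ins L g w e)"
| "csem Ins L (A f) w e = (\<forall>e'. (\<forall>j. e' j \<subseteq> Ins) \<longrightarrow> csem Ins L f w e')"
| "csem Ins L (E f) w e = (\<exists>e'. (\<forall>j. e' j \<subseteq> Ins) \<and> csem Ins L f w e')"
| "csem Ins L (X f) w e = csem Ins L f (w @ [e 0]) (\<lambda>j. e (Suc j))"
| "csem Ins L (U f g) w e =
     (\<exists>k. csem Ins L g (w @ map e [0..<k]) (\<lambda>j. e (j + k)) \<and>
          (\<forall>j<k. csem Ins L f (w @ map e [0..<j]) (\<lambda>i. e (i + j))))"
| "csem Ins L (R f g) w e =
     (\<forall>k. csem Ins L g (w @ map e [0..<k]) (\<lambda>j. e (j + k)) \<or>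
          (\<exists>j<k. csem Ins L f (w @ map e [0..<j]) (\<lambda>i. e (i + j))))"

definition moore :: "'a set \<Rightarrow> ('o \<Rightarrow> bool) \<Rightarrow> nat set \<Rightarrow> nat \<Rightarrow> (nat \<Rightarrow> 'a set \<Rightarrow> nat) \<Rightarrow> (nat \<Rightarrow> 'o) \<Rightarrow> bool" where
  "moore Ins okout T t0 tau out \<longleftrightarrow>
     finite T \<and> t0 \<in> T \<and> (\<forall>t\<in>T. \<forall>e. e \<subseteq> Ins \<longrightarrow> tau t e \<in> T) \<and> (\<forall>t\<in>T. okout (out t))"

definition reach :: "(nat \<Rightarrow> 'a set \<Rightarrow> nat) \<Rightarrow> nat \<Rightarrow> 'a set list \<Rightarrow> nat" where
  "reach tau t0 w = foldl tau t0 w"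

definition ctl_realisable :: "'a set \<Rightarrow> 'a set \<Rightarrow> 'a ctl \<Rightarrow> bool" where
  "ctl_realisable Ins Outs f \<longleftrightarrow>
     (\<exists>T t0 tau out. moore Ins (\<lambda>s. s \<subseteq> Outs) T t0 tau out \<and>
        csem Ins (\<lambda>w. out (reach tau t0 w)) f [] (\<lambda>_. {}))"

datatype 'p ltl =
    LTrue | LFalse | LAtom 'p | LNot "'p ltl"
  | LAnd "'p ltl" "'p ltl" | LOr "'p ltl" "'p ltl"
  | LX "'p ltl" | LU "'p ltl" "'p ltl" | LR "'p ltl" "'p ltl"

primrec lsem :: "('p \<Rightarrow> 'l \<Rightarrow> bool) \<Rightarrow> 'p ltl \<Rightarrow> (nat \<Rightarrow> 'l) \<Rightarrow> bool" where
  "lsem P LTrue w = True"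
| "lsem P LFalse w = False"
| "lsem P (LAtom p) w = P p (w 0)"
| "lsem P (LNot f) w = (\<not> lsem P f w)"
| "lsem P (LAnd f g) w = (lsem P f w \<and> lsem P g w)"
| "lsem P (LOr f g) w = (lsem P f w \<or> lsem P g w)"
| "lsem P (LX f) w = lsem P f (\<lambda>i. w (Suc i))"
| "lsem P (LU f g) w = (\<exists>k. lsem P g (\<lambda>i. w (i + k)) \<and> (\<forall>j<k. lsem P f (\<lambda>i. w (i + j))))"
| "lsem P (LR f g) w = (\<forall>k. lsem P g (\<lambda>i. w (i + k)) \<or> (\<exists>j<k. lsem P f (\<lambda>i. w (i + j))))"

definition LG :: "'p ltl \<Rightarrow> 'p ltl" where "LG f = LR LFalse f"
definition LImp :: "'p ltl \<Rightarrow> 'p ltl \<Rightarrow> 'p ltl" where "LImp f g = LOr (LNot f) g"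
definition LConj :: "'p ltl list \<Rightarrow> 'p ltl" where "LConj fs = foldr LAnd fs LTrue"

text \<open>Atomic propositions of the LTL formula: original outputs and inputs, and the new outputs:
  LV (E phi) j  means  v_{E phi} = j;  LP (A phi) means p_{A phi};  LD j means the proposition d_j,
  i.e. the current input equals the current value of d_j.\<close>
datatype 'a lprop = LOut 'a | LIn 'a | LV "'a ctl" nat | LP "'a ctl" | LD nat

text \<open>Extended output value: (original outputs, v, p, d).\<close>
type_synonym 'a xout = "'a set \<times> ('a ctl \<Rightarrow> nat) \<times> ('a ctl \<Rightarrow> bool) \<times> (nat \<Rightarrow> 'a set)"

fun lprop_sem :: "'a lprop \<Rightarrow> 'a xout \<times> 'a set \<Rightarrow> bool" where
  "lprop_sem (LOut a) ((S, v, p, d), e) = (a \<in> S)"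
| "lprop_sem (LIn a) ((S, v, p, d), e) = (a \<in> e)"
| "lprop_sem (LV f j) ((S, v, p, d), e) = (v f = j)"
| "lprop_sem (LP f) ((S, v, p, d), e) = p f"
| "lprop_sem (LD j) ((S, v, p, d), e) = (e = d j)"

definition xout_ok :: "'a set \<Rightarrow> 'a set \<Rightarrow> nat \<Rightarrow> 'a xout \<Rightarrow> bool" where
  "xout_ok Ins Outs k x \<longleftrightarrow> (case x of (S, v, p, d) \<Rightarrow> S \<subseteq> Outs \<and> (\<forall>f. v f \<le> k) \<and> (\<forall>j. d j \<subseteq> Ins))"

definition computation :: "(nat \<Rightarrow> 'a set \<Rightarrow> nat) \<Rightarrow> nat \<Rightarrow> (nat \<Rightarrow> 'o) \<Rightarrow> (nat \<Rightarrow> 'a set) \<Rightarrow> nat \<Rightarrow> 'o \<times> 'a set" where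
  "computation tau t0 out e j = (out (reach tau t0 (map e [0..<j])), e j)"

definition ltl_realisable :: "'a set \<Rightarrow> 'a set \<Rightarrow> nat \<Rightarrow> 'a lprop ltl \<Rightarrow> bool" where
  "ltl_realisable Ins Outs k f \<longleftrightarrow>
     (\<exists>T t0 tau out. moore Ins (xout_ok Ins Outs k) T t0 tau out \<and>
        (\<forall>e. (\<forall>j. e j \<subseteq> Ins) \<longrightarrow> lsem lprop_sem f (computation tau t0 out e)))"

primrec prime :: "'a ctl \<Rightarrow> 'a lprop ltl" where
  "prime TT = LTrue"
| "prime FF = LFalse"
| "prime (Out a) = LAtom (LOut a)"
| "prime (NOut a) = LNot (LAtom (LOut a))"
| "prime (In a) = LAtom (LIn a)"
| "prime (NIn a) = LNot (LAtom (LIn a))"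
| "prime (And f g) = LAnd (prime f) (prime g)"
| "prime (Or f g) = LOr (prime f) (prime g)"
| "prime (A f) = LAtom (LP (A f))"
| "prime (E f) = LNot (LAtom (LV (E f) 0))"
| "prime (X f) = LX (prime f)"
| "prime (U f g) = LU (prime f) (prime g)"
| "prime (R f g) = LR (prime f) (prime g)"

primrec subfs :: "'a ctl \<Rightarrow> 'a ctl list" where
  "subfs TT = [TT]"
| "subfs FF = [FF]"
| "subfs (Out a) = [Out a]"
| "subfs (NOut a) = [NOut a]"
| "subfs (In a) = [In a]"
| "subfs (NIn a) = [NIn a]"
| "subfs (And f g) = And f g # subfs f @ subfs g"
| "subfs (Or f g) = Or f g # subfs f @ subfs g"
| "subfs (A f) = A f # subfs f"
| "subfs (E f) = E f # subfs f"
| "subfs (X f) = X f # subfs f"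
| "subfs (U f g) = U f g # subfs f @ subfs g"
| "subfs (R f g) = R f g # subfs f @ subfs g"

definition is_E :: "'a ctl \<Rightarrow> bool" where "is_E f \<longleftrightarrow> (\<exists>g. f = E g)"
definition is_A :: "'a ctl \<Rightarrow> bool" where "is_A f \<longleftrightarrow> (\<exists>g. f = A g)"

primrec body :: "'a ctl \<Rightarrow> 'a ctl" where
  "body (E f) = f" | "body (A f) = f"
| "body TT = TT" | "body FF = FF" | "body (Out a) = Out a" | "body (NOut a) = NOut a"
| "body (In a) = In a" | "body (NIn a) = NIn a" | "body (And f g) = And f g"
| "body (Or f g) = Or f g" | "body (X f) = X f" | "body (U f g) = U f g" | "body (R f g) = R f g"

definition F_exist :: "'a ctl \<Rightarrow> 'a ctl list" where "F_exist F = filter is_E (subfs F)"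
definition F_univ :: "'a ctl \<Rightarrow> 'a ctl list" where "F_univ F = filter is_A (subfs F)"

definition Phi_LTL :: "nat \<Rightarrow> 'a ctl \<Rightarrow> 'a lprop ltl" where
  "Phi_LTL k F =
     LAnd (prime F)
      (LAnd (LConj (concat (map (\<lambda>Ef. map (\<lambda>j.
                LG (LImp (LAtom (LV Ef j)) (LImp (LG (LAtom (LD j))) (prime (body Ef))))) [1..<Suc k])
              (F_exist F))))
            (LConj (map (\<lambda>Af. LG (LImp (LAtom (LP Af)) (prime (body Af)))) (F_univ F))))"

record ('s, 'c) nba =
  states :: "'s set"
  init :: "'s set"
  trans :: "'s \<Rightarrow> 'c \<Rightarrow> 's set"
  accepting :: "'s set"

definition nba_wf :: "('s, 'c) nba \<Rightarrow> bool" where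
  "nba_wf B \<longleftrightarrow> finite (states B) \<and> init B \<subseteq> states B \<and> accepting B \<subseteq> states B \<and>
     (\<forall>q c. trans B q c \<subseteq> states B)"

definition nba_accepts :: "('s, 'c) nba \<Rightarrow> (nat \<Rightarrow> 'c) \<Rightarrow> bool" where
  "nba_accepts B w \<longleftrightarrow> (\<exists>r. r 0 \<in> init B \<and> (\<forall>n. r (Suc n) \<in> trans B (r n) (w n)) \<and>
                         (\<exists>\<^sub>\<infinity>n. r n \<in> accepting B))"

text \<open>Atomic propositions of a path formula when its state subformulas are treated as atoms:
  outputs, inputs and the maximal subformulas E chi / A chi (boolean and temporal connectives
  as well as negated literals are interpreted compositionally).\<close>
primrec atoms :: "'a ctl \<Rightarrow> 'a ctl set" where
  "atoms TT = {}"
| "atoms FF = {}"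
| "atoms (Out a) = {Out a}"
| "atoms (NOut a) = {Out a}"
| "atoms (In a) = {In a}"
| "atoms (NIn a) = {In a}"
| "atoms (And f g) = atoms f \<union> atoms g"
| "atoms (Or f g) = atoms f \<union> atoms g"
| "atoms (A f) = {A f}"
| "atoms (E f) = {E f}"
| "atoms (X f) = atoms f"
| "atoms (U f g) = atoms f \<union> atoms g"
| "atoms (R f g) = atoms f \<union> atoms g"

primrec wsem :: "'a ctl \<Rightarrow> (nat \<Rightarrow> 'a ctl set) \<Rightarrow> bool" where
  "wsem TT w = True"
| "wsem FF w = False"
| "wsem (Out a) w = (Out a \<in> w 0)"
| "wsem (NOut a) w = (Out a \<notin> w 0)"
| "wsem (In a) w = (In a \<in> w 0)"
| "wsem (NIn a) w = (In a \<notin> w 0)"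
| "wsem (And f g) w = (wsem f w \<and> wsem g w)"
| "wsem (Or f g) w = (wsem f w \<or> wsem g w)"
| "wsem (A f) w = (A f \<in> w 0)"
| "wsem (E f) w = (E f \<in> w 0)"
| "wsem (X f) w = wsem f (\<lambda>i. w (Suc i))"
| "wsem (U f g) w = (\<exists>k. wsem g (\<lambda>i. w (i + k)) \<and> (\<forall>j<k. wsem f (\<lambda>i. w (i + j))))"
| "wsem (R f g) w = (\<forall>k. wsem g (\<lambda>i. w (i + k)) \<or> (\<exists>j<k. wsem f (\<lambda>i. w (i + j))))"

definition nba_for :: "('s, 'a ctl set) nba \<Rightarrow> 'a ctl \<Rightarrow> bool" where
  "nba_for B f \<longleftrightarrow> nba_wf B \<and>
     (\<forall>w. (\<forall>i. w i \<subseteq> atoms f) \<longrightarrow> (nba_accepts B w \<longleftrightarrow> wsem f w))"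

end

theory Submission
  imports Defs "HOL-Library.Infinite_Set"
begin

text \<open>
  From a Moore system for Phi_LTL, keep only the original outputs. By induction over subformulas,
  p_(A phi) at a node implies A phi there, because Phi_LTL forces phi' on every path and phi' implies
  phi once the flags of the inner quantified subformulas are sound; and v_(E phi) = j > 0 implies
  E phi, witnessed by the path whose input always equals the output d_j. Then Phi' at the root
  gives Phi.

  Conversely, given a Moore system for Phi, raise p_(A phi) and v_(E phi) exactly where A phi and
  E phi hold. Witness paths for E phi are tracked in k slots: a slot stores a state q of the
  automaton for phi such that the product of system and automaton has an accepting path from the
  current state and q; its plan is the input sequence of a fixed positional choice of such a path,
  and it outputs the next input of the plan on d_j. Distinct slots of E phi follow distinct plans,
  and a plan is determined by q, so by pigeonhole the |Q_phi| slots of E phi suffice: if E phi holds and no occupied slot follows an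
  accepted plan, some slot is free for an initial automaton state. Memory plus system state range
  over a finite set, which yields a Moore system for Phi_LTL.
\<close>

lemma map_upt_add: "map es [0..<i + k] = map es [0..<k] @ map (\<lambda>j. es (j + k)) [0..<i]"
  by (induction i) (auto simp: add.commute)

lemma INFM_shift: "(\<exists>\<^sub>\<infinity>n. P n) \<Longrightarrow> (\<exists>\<^sub>\<infinity>n. P (n + (i::nat)))"
  unfolding cofinite_eq_sequentially frequently_def
  using eventually_sequentially_seg[of "\<lambda>n. \<not> P n" i] by simp

lemma reach_append: "reach tau t (u @ w) = reach tau (reach tau t u) w"
  by (simp add: reach_def)

lemma reach_in_states:
  assumes "t \<in> T" and "\<And>t e. t \<in> T \<Longrightarrow> e \<subseteq> Ins \<Longrightarrow> tau t e \<in> T" and "\<forall>a\<in>set w. a \<subseteq> Ins"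
  shows "reach tau t w \<in> T"
  using assms unfolding reach_def by (induction w arbitrary: t) auto

lemma csem_append: "csem Ins L f (u @ w) e = csem Ins (\<lambda>v. L (u @ v)) f w e"
  by (induction f arbitrary: w e) auto

lemma csem_state_formula: "is_state f \<Longrightarrow> csem Ins L f w e = csem Ins L f w e'"
  by (induction f) auto

lemma subfs_trans: "g \<in> set (subfs f) \<Longrightarrow> set (subfs g) \<subseteq> set (subfs f)"
  by (induction f) auto

lemma lsem_LG: "lsem P (LG f) w = (\<forall>k. lsem P f (\<lambda>i. w (i + k)))"
  by (simp add: LG_def)

lemma lsem_LImp: "lsem P (LImp f g) w = (lsem P f w \<longrightarrow> lsem P g w)"
  by (simp add: LImp_def)

lemma lsem_LConj: "lsem P (LConj fs) w = (\<forall>f\<in>set fs. lsem P f w)"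
  by (induction fs) (simp_all add: LConj_def)

abbreviation outs_of :: "'a xout \<Rightarrow> 'a set" where "outs_of x \<equiv> fst x"
abbreviation v_of :: "'a xout \<Rightarrow> 'a ctl \<Rightarrow> nat" where "v_of x \<equiv> fst (snd x)"
abbreviation p_of :: "'a xout \<Rightarrow> 'a ctl \<Rightarrow> bool" where "p_of x \<equiv> fst (snd (snd x))"
abbreviation d_of :: "'a xout \<Rightarrow> nat \<Rightarrow> 'a set" where "d_of x \<equiv> snd (snd (snd x))"

lemma lprop_sem_simps:
  "lprop_sem (LOut a) y = (a \<in> outs_of (fst y))"
  "lprop_sem (LIn a) y = (a \<in> snd y)"
  "lprop_sem (LV f j) y = (v_of (fst y) f = j)"
  "lprop_sem (LP f) y = p_of (fst y) f"
  "lprop_sem (LD j) y = (snd y = d_of (fst y) j)"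
  by (cases y; auto)+

lemma xout_ok_iff:
  "xout_ok Ins Outs k x \<longleftrightarrow> outs_of x \<subseteq> Outs \<and> (\<forall>f. v_of x f \<le> k) \<and> (\<forall>j. d_of x j \<subseteq> Ins)"
  by (cases x) (auto simp: xout_ok_def)

lemma lsem_E_constraint:
  "lsem lprop_sem (LG (LImp (LAtom (LV Ef j)) (LImp (LG (LAtom (LD j))) f))) c \<longleftrightarrow>
     (\<forall>n. v_of (fst (c n)) Ef = j \<longrightarrow> (\<forall>l. snd (c (l + n)) = d_of (fst (c (l + n))) j) \<longrightarrow>
        lsem lprop_sem f (\<lambda>i. c (i + n)))"
  by (simp add: lsem_LG lsem_LImp lprop_sem_simps add.commute)

lemma lsem_A_constraint:
  "lsem lprop_sem (LG (LImp (LAtom (LP Af)) f)) c \<longleftrightarrow>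
     (\<forall>n. p_of (fst (c n)) Af \<longrightarrow> lsem lprop_sem f (\<lambda>i. c (i + n)))"
  by (simp add: lsem_LG lsem_LImp lprop_sem_simps)

lemma lsem_Phi_LTL:
  "lsem lprop_sem (Phi_LTL k F) c \<longleftrightarrow>
     lsem lprop_sem (prime F) c \<and>
     (\<forall>Ef\<in>set (F_exist F). \<forall>j\<in>{1..k}. \<forall>n. v_of (fst (c n)) Ef = j \<longrightarrow>
        (\<forall>l. snd (c (l + n)) = d_of (fst (c (l + n))) j) \<longrightarrow>
        lsem lprop_sem (prime (body Ef)) (\<lambda>i. c (i + n))) \<and>
     (\<forall>Af\<in>set (F_univ F). \<forall>n. p_of (fst (c n)) Af \<longrightarrow>
        lsem lprop_sem (prime (body Af)) (\<lambda>i. c (i + n)))"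
  by (simp only: Phi_LTL_def lsem.simps lsem_LConj set_concat set_map set_upt
      atLeastLessThanSuc_atLeastAtMost ball_UN ball_simps(9) lsem_E_constraint lsem_A_constraint)

section \<open>Tree semantics along paths labelled with the new outputs\<close>

definition labels_along ::
    "('a set list \<Rightarrow> 'x \<Rightarrow> bool) \<Rightarrow> 'a set list \<Rightarrow> (nat \<Rightarrow> 'a set) \<Rightarrow> (nat \<Rightarrow> 'x \<times> 'a set) \<Rightarrow> bool" where
  "labels_along P u es c \<longleftrightarrow> (\<forall>i. snd (c i) = es i \<and> P (u @ map es [0..<i]) (fst (c i)))"

lemma labels_along_shift:
  "labels_along P u es c \<Longrightarrow> labels_along P (u @ map es [0..<k]) (\<lambda>j. es (j + k)) (\<lambda>i. c (i + k))"
  unfolding labels_along_def by (metis append.assoc map_upt_add)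

lemma labels_along_Suc:
  "labels_along P u es c \<Longrightarrow> labels_along P (u @ [es 0]) (\<lambda>j. es (Suc j)) (\<lambda>i. c (Suc i))"
  using labels_along_shift[of P u es c 1] by simp

lemma labels_along_0: "labels_along P u es c \<Longrightarrow> snd (c 0) = es 0 \<and> P u (fst (c 0))"
  unfolding labels_along_def by (metis append_Nil2 list.map(1) upt_0)

definition sound_labels :: "'a set \<Rightarrow> ('a set list \<Rightarrow> 'a set) \<Rightarrow> 'a ctl set \<Rightarrow> 'a set list \<Rightarrow> 'a xout \<Rightarrow> bool" where
  "sound_labels Ins L Sub w x \<longleftrightarrow> outs_of x = L w \<and>
     (\<forall>g. E g \<in> Sub \<longrightarrow> v_of x (E g) \<noteq> 0 \<longrightarrow> csem Ins L (E g) w (\<lambda>_. {})) \<and>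
     (\<forall>g. A g \<in> Sub \<longrightarrow> p_of x (A g) \<longrightarrow> csem Ins L (A g) w (\<lambda>_. {}))"

definition complete_labels :: "'a set \<Rightarrow> ('a set list \<Rightarrow> 'a set) \<Rightarrow> 'a ctl set \<Rightarrow> 'a set list \<Rightarrow> 'a xout \<Rightarrow> bool" where
  "complete_labels Ins L Sub w x \<longleftrightarrow> outs_of x = L w \<and>
     (\<forall>g. E g \<in> Sub \<longrightarrow> csem Ins L (E g) w (\<lambda>_. {}) \<longrightarrow> v_of x (E g) \<noteq> 0) \<and>
     (\<forall>g. A g \<in> Sub \<longrightarrow> csem Ins L (A g) w (\<lambda>_. {}) \<longrightarrow> p_of x (A g))"

lemma csem_if_lsem_prime:
  assumes "labels_along (sound_labels Ins L Sub) u es c" and "set (subfs f) \<subseteq> Sub"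
    and "lsem lprop_sem (prime f) c"
  shows "csem Ins L f u es"
  using assms
proof (induction f arbitrary: u es c)
  case (X f)
  then show ?case using labels_along_Suc by fastforce
next
  case (U f g)
  from U.prems(3) obtain n where "lsem lprop_sem (prime g) (\<lambda>i. c (i + n))"
    and "\<forall>j<n. lsem lprop_sem (prime f) (\<lambda>i. c (i + j))" by auto
  with U.IH[OF labels_along_shift[OF U.prems(1)]] U.prems(2) show ?case
    unfolding csem.simps by (intro exI[of _ n]) auto
next
  case (R f g)
  with labels_along_shift[OF R.prems(1)] show ?case by simp blast
next
  case (And f g)
  then show ?case by simp
next
  case (Or f g)
  then show ?case by auto
qed (auto simp: sound_labels_def lprop_sem_simps dest!: labels_along_0)

lemma lsem_prime_if_csem:
  assumes "labels_along (complete_labels Ins L Sub) u es c" and "set (subfs f) \<subseteq> Sub"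
    and "csem Ins L f u es"
  shows "lsem lprop_sem (prime f) c"
  using assms
proof (induction f arbitrary: u es c)
  case (X f)
  then show ?case using labels_along_Suc by fastforce
next
  case (U f g)
  from U.prems(3) obtain n where "csem Ins L g (u @ map es [0..<n]) (\<lambda>j. es (j + n))"
    and "\<forall>j<n. csem Ins L f (u @ map es [0..<j]) (\<lambda>i. es (i + j))" by auto
  with U.IH[OF labels_along_shift[OF U.prems(1)]] U.prems(2) show ?case
    unfolding prime.simps lsem.simps by (intro exI[of _ n]) auto
next
  case (R f g)
  with labels_along_shift[OF R.prems(1)] show ?case by simp blast
next
  case (And f g)
  then show ?case by simp
next
  case (Or f g)
  then show ?case by auto
next
  case (E f)
  with labels_along_0[OF E.prems(1)] show ?case by (simp add: complete_labels_def lprop_sem_simps)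
qed (auto simp: complete_labels_def lprop_sem_simps dest!: labels_along_0)

section \<open>Automata for path formulas read along tree paths\<close>

definition atom_holds :: "'a set \<Rightarrow> ('a set list \<Rightarrow> 'a set) \<Rightarrow> 'a set list \<Rightarrow> 'a set \<Rightarrow> 'a ctl \<Rightarrow> bool" where
  "atom_holds Ins L w e x = (case x of Out a \<Rightarrow> a \<in> L w | In a \<Rightarrow> a \<in> e
     | A g \<Rightarrow> csem Ins L (A g) w (\<lambda>_. {}) | E g \<Rightarrow> csem Ins L (E g) w (\<lambda>_. {}) | _ \<Rightarrow> False)"

definition atom_word ::
    "'a set \<Rightarrow> ('a set list \<Rightarrow> 'a set) \<Rightarrow> 'a ctl set \<Rightarrow> 'a set list \<Rightarrow> (nat \<Rightarrow> 'a set) \<Rightarrow> nat \<Rightarrow> 'a ctl set" where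
  "atom_word Ins L Atm u es i = {x \<in> Atm. atom_holds Ins L (u @ map es [0..<i]) (es i) x}"

lemma atom_word_shift:
  "(\<lambda>i. atom_word Ins L Atm u es (i + k)) = atom_word Ins L Atm (u @ map es [0..<k]) (\<lambda>j. es (j + k))"
  by (rule ext) (simp add: atom_word_def map_upt_add)

lemma wsem_atom_word: "atoms f \<subseteq> Atm \<Longrightarrow> wsem f (atom_word Ins L Atm u es) = csem Ins L f u es"
proof (induction f arbitrary: u es)
  case (X f)
  then show ?case using atom_word_shift[of Ins L Atm u es 1] by simp
next
  case (U f g)
  then show ?case by (simp add: atom_word_shift)
next
  case (R f g)
  then show ?case by (simp add: atom_word_shift)
qed (auto simp: atom_word_def atom_holds_def)

lemma nba_for_csem:
  "nba_for B f \<Longrightarrow> nba_accepts B (atom_word Ins L (atoms f) u es) \<longleftrightarrow> csem Ins L f u es"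
  unfolding nba_for_def using wsem_atom_word[of f "atoms f" Ins L u es] by (auto simp: atom_word_def)

section \<open>Positional accepting paths in Buchi graphs\<close>

definition is_path :: "('v \<Rightarrow> ('i \<times> 'v) set) \<Rightarrow> (nat \<Rightarrow> 'v) \<Rightarrow> (nat \<Rightarrow> 'i) \<Rightarrow> bool" where
  "is_path succ vs es \<longleftrightarrow> (\<forall>n. (es n, vs (Suc n)) \<in> succ (vs n))"

definition buchi_winning :: "('v \<Rightarrow> ('i \<times> 'v) set) \<Rightarrow> 'v set \<Rightarrow> 'v set" where
  "buchi_winning succ F = {v. \<exists>vs es. vs 0 = v \<and> is_path succ vs es \<and> (\<exists>\<^sub>\<infinity>n. vs n \<in> F)}"

lemma is_path_suffix: "is_path succ vs es \<Longrightarrow> is_path succ (\<lambda>n. vs (n + i)) (\<lambda>n. es (n + i))"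
  unfolding is_path_def by simp

lemma buchi_winning_suffix:
  assumes "is_path succ vs es" and "\<exists>\<^sub>\<infinity>n. vs n \<in> F"
  shows "vs i \<in> buchi_winning succ F"
  unfolding buchi_winning_def using is_path_suffix[OF assms(1), of i] INFM_shift[OF assms(2), of i]
  by (intro CollectI exI[of _ "\<lambda>n. vs (n + i)"] exI[of _ "\<lambda>n. es (n + i)"]) simp

text \<open>Choosing a successor that lowers the rank until F is visited yields a positional accepting
  path from every winning vertex.\<close>
definition buchi_rank :: "('v \<Rightarrow> ('i \<times> 'v) set) \<Rightarrow> 'v set \<Rightarrow> 'v \<Rightarrow> nat" where
  "buchi_rank succ F v = (LEAST n. \<exists>vs es. vs 0 = v \<and> is_path succ vs es \<and> (\<exists>\<^sub>\<infinity>n. vs n \<in> F) \<and>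
     vs (Suc n) \<in> F)"

lemma buchi_rank_step:
  assumes "v \<in> buchi_winning succ F"
  shows "\<exists>x. x \<in> succ v \<and> snd x \<in> buchi_winning succ F \<and>
    (snd x \<in> F \<or> buchi_rank succ F (snd x) < buchi_rank succ F v)"
proof -
  define P where "P v n \<longleftrightarrow> (\<exists>vs es. vs 0 = v \<and> is_path succ vs es \<and> (\<exists>\<^sub>\<infinity>n. vs n \<in> F) \<and>
     vs (Suc n) \<in> F)" for v n
  have rank: "buchi_rank succ F = (\<lambda>v. LEAST n. P v n)"
    unfolding buchi_rank_def P_def by simp
  from assms obtain vs es where "vs 0 = v" "is_path succ vs es" "\<exists>\<^sub>\<infinity>n. vs n \<in> F"
    unfolding buchi_winning_def by blast
  moreover from this(3) obtain m where "vs (Suc m) \<in> F"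
    unfolding INFM_nat by (metis Suc_pred)
  ultimately have "P v m" unfolding P_def by blast
  then have "P v (buchi_rank succ F v)" unfolding rank by (rule LeastI)
  then obtain vs es where vs: "vs 0 = v" "is_path succ vs es" "\<exists>\<^sub>\<infinity>n. vs n \<in> F"
      and hit: "vs (Suc (buchi_rank succ F v)) \<in> F"
    unfolding P_def by blast
  have "vs 1 \<in> F \<or> buchi_rank succ F (vs 1) < buchi_rank succ F v"
  proof (cases "buchi_rank succ F v")
    case 0
    then show ?thesis using hit by simp
  next
    case (Suc n)
    have "P (vs 1) n"
      unfolding P_def using is_path_suffix[OF vs(2), of 1] INFM_shift[OF vs(3), of 1] hit Suc
      by (intro exI[of _ "\<lambda>i. vs (i + 1)"]) auto
    then have "buchi_rank succ F (vs 1) \<le> n" unfolding rank by (rule Least_le)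
    then show ?thesis using Suc by simp
  qed
  moreover have "(es 0, vs 1) \<in> succ v" using vs(1,2) unfolding is_path_def by (metis One_nat_def)
  ultimately show ?thesis using buchi_winning_suffix[OF vs(2,3), of 1] by (intro exI[of _ "(es 0, vs 1)"]) auto
qed

definition buchi_choice :: "('v \<Rightarrow> ('i \<times> 'v) set) \<Rightarrow> 'v set \<Rightarrow> 'v \<Rightarrow> 'i \<times> 'v" where
  "buchi_choice succ F v = (SOME x. x \<in> succ v \<and> snd x \<in> buchi_winning succ F \<and>
     (snd x \<in> F \<or> buchi_rank succ F (snd x) < buchi_rank succ F v))"

lemma buchi_choice:
  assumes "v \<in> buchi_winning succ F"
  shows "buchi_choice succ F v \<in> succ v" and "snd (buchi_choice succ F v) \<in> buchi_winning succ F"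
    and "snd (buchi_choice succ F v) \<in> F \<or>
      buchi_rank succ F (snd (buchi_choice succ F v)) < buchi_rank succ F v"
  using someI_ex[OF buchi_rank_step[OF assms]] unfolding buchi_choice_def by blast+

lemma buchi_choice_iter_winning:
  "v \<in> buchi_winning succ F \<Longrightarrow> ((snd \<circ> buchi_choice succ F) ^^ n) v \<in> buchi_winning succ F"
  by (induction n) (auto intro: buchi_choice(2))

lemma buchi_choice_visits:
  "v \<in> buchi_winning succ F \<Longrightarrow> \<exists>m. ((snd \<circ> buchi_choice succ F) ^^ Suc m) v \<in> F"
proof (induction "buchi_rank succ F v" arbitrary: v rule: less_induct)
  case less
  show ?case
  proof (cases "snd (buchi_choice succ F v) \<in> F")
    case True
    then show ?thesis by (intro exI[of _ 0]) simp
  next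
    case False
    with buchi_choice[OF less.prems] obtain m
      where "((snd \<circ> buchi_choice succ F) ^^ Suc m) (snd (buchi_choice succ F v)) \<in> F"
      using less.hyps by blast
    then show ?thesis by (intro exI[of _ "Suc m"]) (simp only: funpow_Suc_right o_apply)
  qed
qed

lemma buchi_choice_recurrent:
  assumes "v \<in> buchi_winning succ F"
  shows "\<exists>\<^sub>\<infinity>n. ((snd \<circ> buchi_choice succ F) ^^ n) v \<in> F"
  unfolding INFM_nat
proof
  fix m
  obtain m' where "((snd \<circ> buchi_choice succ F) ^^ Suc m') (((snd \<circ> buchi_choice succ F) ^^ m) v) \<in> F"
    using buchi_choice_visits[OF buchi_choice_iter_winning[OF assms]] by blast
  then have "((snd \<circ> buchi_choice succ F) ^^ (Suc m' + m)) v \<in> F" by (simp only: funpow_add o_apply)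
  then show "\<exists>n>m. ((snd \<circ> buchi_choice succ F) ^^ n) v \<in> F" by (intro exI[of _ "Suc m' + m"]) simp
qed

section \<open>From a CTL* realiser to an LTL realiser\<close>

lemma moore_of_finite_system:
  assumes "finite Z" and "z0 \<in> Z" and closed: "\<forall>z\<in>Z. \<forall>e. e \<subseteq> Ins \<longrightarrow> \<delta> z e \<in> Z"
    and "\<forall>z\<in>Z. ok (lab z)"
  obtains T t0 tau out where "moore Ins ok T t0 tau out"
    and "\<And>e. \<forall>j. e j \<subseteq> Ins \<Longrightarrow>
      computation tau t0 out e = (\<lambda>i. (lab (foldl \<delta> z0 (map e [0..<i])), e i))"
proof -
  obtain enc where enc: "bij_betw enc Z {0..<card Z}"
    using ex_bij_betw_finite_nat[OF assms(1)] by blast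
  define dec where "dec = inv_into Z enc"
  define tau where "tau n e = enc (\<delta> (dec n) e)" for n e
  have dec_enc: "dec (enc z) = z" if "z \<in> Z" for z
    unfolding dec_def using enc that by (simp add: bij_betw_inv_into_left)
  have dec_in: "dec n \<in> Z" if "n \<in> {0..<card Z}" for n
    unfolding dec_def using bij_betw_inv_into[OF enc] that by (rule bij_betw_apply)
  have enc_in: "enc z \<in> {0..<card Z}" if "z \<in> Z" for z
    using enc that by (rule bij_betw_apply)
  have reach: "foldl \<delta> z0 w \<in> Z \<and> reach tau (enc z0) w = enc (foldl \<delta> z0 w)"
    if "\<forall>a\<in>set w. a \<subseteq> Ins" for w
    using that by (induction w rule: rev_induct) (auto simp: reach_def tau_def dec_enc closed assms(2))
  show thesis
  proof
    show "moore Ins ok {0..<card Z} (enc z0) tau (lab \<circ> dec)"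
      unfolding moore_def tau_def using assms(2,4) closed dec_in enc_in by auto
  next
    fix e :: "nat \<Rightarrow> _" assume e: "\<forall>j. e j \<subseteq> Ins"
    show "computation tau (enc z0) (lab \<circ> dec) e = (\<lambda>i. (lab (foldl \<delta> z0 (map e [0..<i])), e i))"
    proof
      fix i
      have "\<forall>a\<in>set (map e [0..<i]). a \<subseteq> Ins" using e by auto
      then show "computation tau (enc z0) (lab \<circ> dec) e i = (lab (foldl \<delta> z0 (map e [0..<i])), e i)"
        using reach unfolding computation_def by (simp add: dec_enc)
    qed
  qed
qed

text \<open>A slot (Ef, r), with r a state of the automaton for Ef, is only an index; the memory maps
  each occupied slot to the automaton state it tracks.\<close>
type_synonym ('a, 's) slot_memory = "'a ctl \<times> 's \<Rightarrow> 's option"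
type_synonym ('a, 's) mstate = "nat \<times> ('a, 's) slot_memory"

locale ctl_realiser =
  fixes Ins Outs :: "'a set" and Phi :: "'a ctl" and aut :: "'a ctl \<Rightarrow> ('s, 'a ctl set) nba"
    and T :: "nat set" and t0 :: nat and tau :: "nat \<Rightarrow> 'a set \<Rightarrow> nat" and out :: "nat \<Rightarrow> 'a set"
  assumes moore_system: "moore Ins (\<lambda>s. s \<subseteq> Outs) T t0 tau out"
    and realises: "csem Ins (\<lambda>w. out (reach tau t0 w)) Phi [] (\<lambda>_. {})"
    and state_formula: "is_state Phi"
    and automata: "\<forall>Ef \<in> set (F_exist Phi). nba_for (aut Ef) (body Ef)"
begin

abbreviation Exs :: "'a ctl set" where "Exs \<equiv> set (F_exist Phi)"

lemma tau_closed: "t \<in> T \<Longrightarrow> e \<subseteq> Ins \<Longrightarrow> tau t e \<in> T"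
  and t0_in: "t0 \<in> T" and finite_T: "finite T" and out_in: "t \<in> T \<Longrightarrow> out t \<subseteq> Outs"
  using moore_system unfolding moore_def by auto

lemma Exs_E: "Ef \<in> Exs \<Longrightarrow> Ef = E (body Ef)"
  unfolding F_exist_def is_E_def by auto

lemma Exs_subfs: "Ef \<in> Exs \<Longrightarrow> Ef \<in> set (subfs Phi)"
  unfolding F_exist_def by simp

lemma automaton_wf:
  assumes "Ef \<in> Exs"
  shows "finite (states (aut Ef))" and "init (aut Ef) \<subseteq> states (aut Ef)"
    and "trans (aut Ef) q c \<subseteq> states (aut Ef)"
  using automata assms unfolding nba_for_def nba_wf_def by blast+

definition tree :: "nat \<Rightarrow> 'a set list \<Rightarrow> 'a set" where
  "tree t w = out (reach tau t w)"

definition holds :: "nat \<Rightarrow> 'a ctl \<Rightarrow> bool" where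
  "holds t f \<longleftrightarrow> csem Ins (tree t) f [] (\<lambda>_. {})"

lemma csem_tree: "csem Ins (tree t) f u e = csem Ins (tree (reach tau t u)) f [] e"
proof -
  have "(\<lambda>v. tree t (u @ v)) = tree (reach tau t u)"
    by (rule ext) (simp add: tree_def reach_append)
  then show ?thesis using csem_append[of Ins "tree t" f u "[]" e] by simp
qed

definition letter :: "'a ctl \<Rightarrow> nat \<Rightarrow> 'a set \<Rightarrow> 'a ctl set" where
  "letter Ef t e = {x \<in> atoms (body Ef). atom_holds Ins (tree t) [] e x}"

definition accepts_from :: "'a ctl \<Rightarrow> nat \<Rightarrow> (nat \<Rightarrow> 'a set) \<Rightarrow> bool" where
  "accepts_from Ef t es \<longleftrightarrow> nba_accepts (aut Ef) (\<lambda>i. letter Ef (reach tau t (map es [0..<i])) (es i))"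

lemma accepts_from_iff_csem:
  assumes "Ef \<in> Exs"
  shows "accepts_from Ef t es \<longleftrightarrow> csem Ins (tree t) (body Ef) [] es"
proof -
  have "atom_holds Ins (tree t) u e x = atom_holds Ins (tree (reach tau t u)) [] e x" for u e x
    by (cases x) (simp_all add: atom_holds_def csem_tree[of t _ u] del: csem.simps,
        simp_all add: tree_def reach_def)
  then have "atom_word Ins (tree t) (atoms (body Ef)) [] es =
      (\<lambda>i. letter Ef (reach tau t (map es [0..<i])) (es i))"
    by (auto simp: atom_word_def letter_def)
  then show ?thesis
    using nba_for_csem[of "aut Ef" "body Ef" Ins "tree t" "[]" es] automata assms
    unfolding accepts_from_def by simp
qed

definition prod_succ :: "'a ctl \<Rightarrow> nat \<times> 's \<Rightarrow> ('a set \<times> (nat \<times> 's)) set" where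
  "prod_succ Ef v = {(e, (tau (fst v) e, q')) | e q'.
     e \<subseteq> Ins \<and> q' \<in> trans (aut Ef) (snd v) (letter Ef (fst v) e)}"

definition winning :: "'a ctl \<Rightarrow> (nat \<times> 's) set" where
  "winning Ef = buchi_winning (prod_succ Ef) {v. snd v \<in> accepting (aut Ef)}"

definition choice :: "'a ctl \<Rightarrow> nat \<times> 's \<Rightarrow> 'a set \<times> (nat \<times> 's)" where
  "choice Ef = buchi_choice (prod_succ Ef) {v. snd v \<in> accepting (aut Ef)}"

definition follow :: "'a ctl \<Rightarrow> nat \<times> 's \<Rightarrow> nat \<times> 's" where
  "follow Ef = snd \<circ> choice Ef"

definition plan :: "'a ctl \<Rightarrow> nat \<times> 's \<Rightarrow> nat \<Rightarrow> 'a set" where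
  "plan Ef v i = fst (choice Ef ((follow Ef ^^ i) v))"

lemma choice_step:
  assumes "v \<in> winning Ef"
  shows "fst (choice Ef v) \<subseteq> Ins" and "fst (follow Ef v) = tau (fst v) (fst (choice Ef v))"
    and "snd (follow Ef v) \<in> trans (aut Ef) (snd v) (letter Ef (fst v) (fst (choice Ef v)))"
    and "follow Ef v \<in> winning Ef"
proof -
  have "choice Ef v \<in> prod_succ Ef v" and "follow Ef v \<in> winning Ef"
    using buchi_choice(1,2)[OF assms[unfolded winning_def]] unfolding choice_def follow_def winning_def by auto
  then show "fst (choice Ef v) \<subseteq> Ins" and "fst (follow Ef v) = tau (fst v) (fst (choice Ef v))"
    and "snd (follow Ef v) \<in> trans (aut Ef) (snd v) (letter Ef (fst v) (fst (choice Ef v)))"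
    and "follow Ef v \<in> winning Ef"
    unfolding prod_succ_def follow_def by auto
qed

lemma follow_iter_winning: "v \<in> winning Ef \<Longrightarrow> (follow Ef ^^ n) v \<in> winning Ef"
  by (induction n) (auto intro: choice_step(4))

lemma plan_0: "plan Ef v 0 = fst (choice Ef v)"
  by (simp add: plan_def)

lemma plan_follow: "plan Ef (follow Ef v) i = plan Ef v (Suc i)"
  by (simp only: plan_def funpow_Suc_right o_apply)

lemma plan_eqI:
  "fst (choice Ef v) = fst (choice Ef w) \<Longrightarrow> plan Ef (follow Ef v) = plan Ef (follow Ef w) \<Longrightarrow>
    plan Ef v = plan Ef w"
  by (rule ext, metis plan_0 plan_follow not0_implies_Suc)

lemma fst_follow_iter:
  "v \<in> winning Ef \<Longrightarrow> fst ((follow Ef ^^ n) v) = reach tau (fst v) (map (plan Ef v) [0..<n])"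
proof (induction n)
  case 0
  then show ?case by (simp add: reach_def)
next
  case (Suc n)
  then show ?case
    using choice_step(2)[OF follow_iter_winning[OF Suc.prems, of n]] by (simp add: reach_def plan_def)
qed

lemma plan_accepted:
  assumes "v \<in> winning Ef" and "snd v \<in> init (aut Ef)"
  shows "accepts_from Ef (fst v) (plan Ef v)"
  unfolding accepts_from_def nba_accepts_def
proof (intro exI[of _ "\<lambda>n. snd ((follow Ef ^^ n) v)"] conjI allI)
  show "snd ((follow Ef ^^ 0) v) \<in> init (aut Ef)" using assms(2) by simp
next
  fix n
  show "snd ((follow Ef ^^ Suc n) v) \<in> trans (aut Ef) (snd ((follow Ef ^^ n) v))
      (letter Ef (reach tau (fst v) (map (plan Ef v) [0..<n])) (plan Ef v n))"
    using choice_step(3)[OF follow_iter_winning[OF assms(1)]] fst_follow_iter[OF assms(1)]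
    by (simp add: plan_def)
next
  show "\<exists>\<^sub>\<infinity>n. snd ((follow Ef ^^ n) v) \<in> accepting (aut Ef)"
    using buchi_choice_recurrent[OF assms(1)[unfolded winning_def]] unfolding follow_def choice_def by simp
qed

lemma winning_initial_exists:
  assumes "Ef \<in> Exs" and "holds t Ef"
  shows "\<exists>q. q \<in> init (aut Ef) \<and> (t, q) \<in> winning Ef"
proof -
  obtain es where es: "\<forall>j. es j \<subseteq> Ins" and "csem Ins (tree t) (body Ef) [] es"
    using assms Exs_E[OF assms(1)] unfolding holds_def by (metis csem.simps(10))
  then obtain r where r: "r 0 \<in> init (aut Ef)"
      "\<forall>n. r (Suc n) \<in> trans (aut Ef) (r n) (letter Ef (reach tau t (map es [0..<n])) (es n))"
      "\<exists>\<^sub>\<infinity>n. r n \<in> accepting (aut Ef)"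
    using accepts_from_iff_csem[OF assms(1)] unfolding accepts_from_def nba_accepts_def by blast
  define vs where "vs n = (reach tau t (map es [0..<n]), r n)" for n
  have "is_path (prod_succ Ef) vs es"
    unfolding is_path_def prod_succ_def vs_def using r(2) es by (auto simp: reach_def)
  moreover have "\<exists>\<^sub>\<infinity>n. vs n \<in> {v. snd v \<in> accepting (aut Ef)}" using r(3) by (simp add: vs_def)
  ultimately have "vs 0 \<in> winning Ef" unfolding winning_def by (rule buchi_winning_suffix)
  then show ?thesis using r(1) by (auto simp: vs_def reach_def)
qed

definition slots :: "('a ctl \<times> 's) set" where
  "slots = Sigma Exs (\<lambda>Ef. states (aut Ef))"

definition fresh :: "'a ctl \<Rightarrow> nat \<Rightarrow> 's" where
  "fresh Ef t = (SOME q. q \<in> init (aut Ef) \<and> (t, q) \<in> winning Ef)"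

definition covered :: "('a, 's) slot_memory \<Rightarrow> 'a ctl \<Rightarrow> nat \<Rightarrow> bool" where
  "covered m Ef t \<longleftrightarrow> (\<exists>r q. m (Ef, r) = Some q \<and> accepts_from Ef t (plan Ef (t, q)))"

definition needs_slot :: "('a, 's) slot_memory \<Rightarrow> 'a ctl \<Rightarrow> nat \<Rightarrow> bool" where
  "needs_slot m Ef t \<longleftrightarrow> Ef \<in> Exs \<and> holds t Ef \<and> \<not> covered m Ef t"

definition free_slot :: "('a, 's) slot_memory \<Rightarrow> 'a ctl \<Rightarrow> 's" where
  "free_slot m Ef = (SOME r. r \<in> states (aut Ef) \<and> m (Ef, r) = None)"

definition allocate :: "nat \<Rightarrow> ('a, 's) slot_memory \<Rightarrow> ('a, 's) slot_memory" where
  "allocate t m x =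
     (if needs_slot m (fst x) t \<and> snd x = free_slot m (fst x) then Some (fresh (fst x) t) else m x)"

definition memory_inv :: "nat \<Rightarrow> ('a, 's) slot_memory \<Rightarrow> bool" where
  "memory_inv t m \<longleftrightarrow>
     (\<forall>x q. m x = Some q \<longrightarrow> x \<in> slots \<and> q \<in> states (aut (fst x)) \<and> (t, q) \<in> winning (fst x)) \<and>
     (\<forall>Ef r1 r2 q1 q2. m (Ef, r1) = Some q1 \<longrightarrow> m (Ef, r2) = Some q2 \<longrightarrow> r1 \<noteq> r2 \<longrightarrow>
        plan Ef (t, q1) \<noteq> plan Ef (t, q2))"

lemma memory_invD:
  assumes "memory_inv t m"
  shows "m x = Some q \<Longrightarrow> x \<in> slots" and "m x = Some q \<Longrightarrow> q \<in> states (aut (fst x))"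
    and "m x = Some q \<Longrightarrow> (t, q) \<in> winning (fst x)"
    and "m (Ef, r1) = Some q1 \<Longrightarrow> m (Ef, r2) = Some q2 \<Longrightarrow> r1 \<noteq> r2 \<Longrightarrow>
      plan Ef (t, q1) \<noteq> plan Ef (t, q2)"
  using assms unfolding memory_inv_def by blast+

lemma fresh:
  assumes "Ef \<in> Exs" and "holds t Ef"
  shows "fresh Ef t \<in> init (aut Ef)" and "(t, fresh Ef t) \<in> winning Ef"
    and "accepts_from Ef t (plan Ef (t, fresh Ef t))"
proof -
  show "fresh Ef t \<in> init (aut Ef)" and winning: "(t, fresh Ef t) \<in> winning Ef"
    unfolding fresh_def using someI_ex[OF winning_initial_exists[OF assms]] by blast+
  with plan_accepted[OF winning] show "accepts_from Ef t (plan Ef (t, fresh Ef t))" by simp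
qed

lemma free_slot:
  assumes inv: "memory_inv t m" and need: "needs_slot m Ef t"
  shows "free_slot m Ef \<in> states (aut Ef)" and "m (Ef, free_slot m Ef) = None"
proof -
  have Ef: "Ef \<in> Exs" "holds t Ef" "\<not> covered m Ef t" using need unfolding needs_slot_def by auto
  define Q where "Q = states (aut Ef)"
  have "\<exists>r\<in>Q. m (Ef, r) = None"
  proof (rule ccontr)
    assume occupied: "\<not> ?thesis"
    define f where "f r = the (m (Ef, r))" for r
    have f: "m (Ef, r) = Some (f r)" if "r \<in> Q" for r using occupied that f_def by auto
    have "f ` Q \<subseteq> Q" using memory_invD(2)[OF inv] f unfolding Q_def by fastforce
    moreover have "inj_on f Q" using memory_invD(4)[OF inv] f unfolding inj_on_def by metis
    ultimately have "f ` Q = Q" using endo_inj_surj automaton_wf(1)[OF Ef(1)] Q_def by blast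
    moreover have "fresh Ef t \<in> Q" using fresh(1)[OF Ef(1,2)] automaton_wf(2)[OF Ef(1)] Q_def by blast
    ultimately obtain r where "r \<in> Q" "m (Ef, r) = Some (fresh Ef t)" using f by force
    then have "covered m Ef t" unfolding covered_def using fresh(3)[OF Ef(1,2)] by blast
    with Ef(3) show False by simp
  qed
  then show "free_slot m Ef \<in> states (aut Ef)" and "m (Ef, free_slot m Ef) = None"
    unfolding free_slot_def Q_def by (metis (mono_tags, lifting) someI_ex)+
qed

lemma allocate_keeps: "memory_inv t m \<Longrightarrow> m x = Some q \<Longrightarrow> allocate t m x = Some q"
  using free_slot(2)[of t m "fst x"] unfolding allocate_def by (cases x) auto

lemma covered_allocate:
  assumes "memory_inv t m" and "Ef \<in> Exs" and "holds t Ef"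
  shows "covered (allocate t m) Ef t"
proof (cases "covered m Ef t")
  case True
  then show ?thesis using allocate_keeps[OF assms(1)] unfolding covered_def by metis
next
  case False
  then have "allocate t m (Ef, free_slot m Ef) = Some (fresh Ef t)"
    using assms unfolding allocate_def needs_slot_def by simp
  then show ?thesis unfolding covered_def using fresh(3)[OF assms(2,3)] by blast
qed

lemma allocate_Some:
  "allocate t m (Ef, r) = Some q \<Longrightarrow>
    m (Ef, r) = Some q \<or> needs_slot m Ef t \<and> r = free_slot m Ef \<and> q = fresh Ef t"
  unfolding allocate_def by (auto split: if_splits)

lemma plan_fresh_differs:
  assumes need: "needs_slot m Ef t" and q: "m (Ef, r) = Some q"
  shows "plan Ef (t, q) \<noteq> plan Ef (t, fresh Ef t)"
proof
  assume "plan Ef (t, q) = plan Ef (t, fresh Ef t)"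
  with need fresh(3)[of Ef t] have "accepts_from Ef t (plan Ef (t, q))"
    unfolding needs_slot_def by simp
  with q have "covered m Ef t" unfolding covered_def by blast
  with need show False unfolding needs_slot_def by simp
qed

lemma memory_inv_allocate:
  assumes inv: "memory_inv t m"
  shows "memory_inv t (allocate t m)"
proof -
  have "x \<in> slots \<and> q \<in> states (aut (fst x)) \<and> (t, q) \<in> winning (fst x)"
    if "allocate t m x = Some q" for x q
  proof -
    obtain Ef r where x: "x = (Ef, r)" by fastforce
    from allocate_Some[OF that[unfolded x]] show ?thesis
    proof (elim disjE conjE)
      assume "m (Ef, r) = Some q"
      then show ?thesis using memory_invD(1-3)[OF inv] x by blast
    next
      assume need: "needs_slot m Ef t" and "r = free_slot m Ef" "q = fresh Ef t"
      then have Ef: "Ef \<in> Exs" "holds t Ef" unfolding needs_slot_def by auto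
      then show ?thesis using free_slot(1)[OF inv need] fresh(1,2)[OF Ef] automaton_wf(2)[OF Ef(1)]
        unfolding slots_def x \<open>r = free_slot m Ef\<close> \<open>q = fresh Ef t\<close> by auto
    qed
  qed
  moreover have "plan Ef (t, q1) \<noteq> plan Ef (t, q2)"
    if "allocate t m (Ef, r1) = Some q1" "allocate t m (Ef, r2) = Some q2" "r1 \<noteq> r2" for Ef r1 r2 q1 q2
    using allocate_Some[OF that(1)] allocate_Some[OF that(2)]
  proof (elim disjE conjE)
    assume "m (Ef, r1) = Some q1" "m (Ef, r2) = Some q2"
    then show ?thesis using memory_invD(4)[OF inv] that(3) by blast
  next
    assume "m (Ef, r1) = Some q1" "needs_slot m Ef t" "q2 = fresh Ef t"
    then show ?thesis using plan_fresh_differs by blast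
  next
    assume "needs_slot m Ef t" "q1 = fresh Ef t" "m (Ef, r2) = Some q2"
    then show ?thesis using plan_fresh_differs by metis
  next
    assume "r1 = free_slot m Ef" "r2 = free_slot m Ef"
    then show ?thesis using that(3) by simp
  qed
  ultimately show ?thesis unfolding memory_inv_def by blast
qed

definition advance :: "nat \<Rightarrow> ('a, 's) slot_memory \<Rightarrow> 'a set \<Rightarrow> ('a, 's) slot_memory" where
  "advance t m e x = (case m x of None \<Rightarrow> None
     | Some q \<Rightarrow> if fst (choice (fst x) (t, q)) = e then Some (snd (follow (fst x) (t, q))) else None)"

lemma advance_Some:
  "advance t m e x = Some q' \<longleftrightarrow>
     (\<exists>q. m x = Some q \<and> fst (choice (fst x) (t, q)) = e \<and> q' = snd (follow (fst x) (t, q)))"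
  unfolding advance_def by (auto split: option.splits)

lemma advance_SomeE:
  assumes "memory_inv t m" and "advance t m e x = Some q'"
  obtains q where "m x = Some q" and "fst (choice (fst x) (t, q)) = e"
    and "follow (fst x) (t, q) = (tau t e, q')"
proof -
  from assms(2) obtain q where q: "m x = Some q" "fst (choice (fst x) (t, q)) = e"
    "q' = snd (follow (fst x) (t, q))" unfolding advance_Some by blast
  moreover have "follow (fst x) (t, q) = (tau t e, q')"
    using choice_step(2)[OF memory_invD(3)[OF assms(1) q(1)]] q(2,3) by (simp add: prod_eq_iff)
  ultimately show thesis using that by blast
qed

text \<open>Slots whose plans agree on the current input and differ afterwards still differ after the
  step, so the invariant survives.\<close>
lemma memory_inv_advance:
  assumes inv: "memory_inv t m"
  shows "memory_inv (tau t e) (advance t m e)"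
proof -
  have "x \<in> slots \<and> q' \<in> states (aut (fst x)) \<and> (tau t e, q') \<in> winning (fst x)"
    if adv: "advance t m e x = Some q'" for x q'
  proof -
    obtain q where q: "m x = Some q" "fst (choice (fst x) (t, q)) = e"
      and follow: "follow (fst x) (t, q) = (tau t e, q')"
      using advance_SomeE[OF inv adv] .
    have x: "fst x \<in> Exs" "(t, q) \<in> winning (fst x)" "x \<in> slots"
      using memory_invD(1,3)[OF inv q(1)] unfolding slots_def by auto
    show ?thesis
      using choice_step(3,4)[OF x(2)] automaton_wf(3)[OF x(1)] x(3) q(2) follow by auto
  qed
  moreover have "plan Ef (tau t e, q1') \<noteq> plan Ef (tau t e, q2')"
    if adv1: "advance t m e (Ef, r1) = Some q1'" and adv2: "advance t m e (Ef, r2) = Some q2'"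
      and "r1 \<noteq> r2" for Ef r1 r2 q1' q2'
  proof
    assume same: "plan Ef (tau t e, q1') = plan Ef (tau t e, q2')"
    obtain q1 where q1: "m (Ef, r1) = Some q1" "fst (choice Ef (t, q1)) = e"
      "follow Ef (t, q1) = (tau t e, q1')" using advance_SomeE[OF inv adv1] by auto
    obtain q2 where q2: "m (Ef, r2) = Some q2" "fst (choice Ef (t, q2)) = e"
      "follow Ef (t, q2) = (tau t e, q2')" using advance_SomeE[OF inv adv2] by auto
    have "plan Ef (t, q1) = plan Ef (t, q2)" using same q1(2,3) q2(2,3) by (auto intro: plan_eqI)
    then show False using memory_invD(4)[OF inv q1(1) q2(1) \<open>r1 \<noteq> r2\<close>] by simp
  qed
  ultimately show ?thesis unfolding memory_inv_def by blast
qed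

definition good_state :: "('a, 's) mstate \<Rightarrow> bool" where
  "good_state z \<longleftrightarrow> fst z \<in> T \<and> memory_inv (fst z) (snd z) \<and>
     (\<forall>Ef\<in>Exs. holds (fst z) Ef \<longrightarrow> covered (snd z) Ef (fst z))"

definition start :: "('a, 's) mstate" where
  "start = (t0, allocate t0 Map.empty)"

definition step :: "('a, 's) mstate \<Rightarrow> 'a set \<Rightarrow> ('a, 's) mstate" where
  "step z e = (tau (fst z) e, allocate (tau (fst z) e) (advance (fst z) (snd z) e))"

lemma good_state_allocate:
  "t \<in> T \<Longrightarrow> memory_inv t m \<Longrightarrow> good_state (t, allocate t m)"
  unfolding good_state_def using memory_inv_allocate covered_allocate by simp

lemma good_start: "good_state start"
  unfolding start_def using t0_in by (intro good_state_allocate) (simp_all add: memory_inv_def)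

lemma good_step:
  assumes "good_state z" and "e \<subseteq> Ins"
  shows "good_state (step z e)"
proof -
  have "tau (fst z) e \<in> T" and "memory_inv (tau (fst z) e) (advance (fst z) (snd z) e)"
    using assms tau_closed memory_inv_advance unfolding good_state_def by auto
  then show ?thesis unfolding step_def by (rule good_state_allocate)
qed

lemma finite_slots: "finite slots"
  unfolding slots_def using automaton_wf(1) by (intro finite_SigmaI) auto

lemma card_slots: "card slots = (\<Sum>Ef\<in>Exs. card (states (aut Ef)))"
  unfolding slots_def using automaton_wf(1) by (subst card_SigmaI) auto

lemma finite_good_states: "finite {z. good_state z}"
proof -
  define Qs where "Qs = (\<Union>Ef\<in>Exs. states (aut Ef))"
  have "finite Qs" unfolding Qs_def using automaton_wf(1) by blast
  then have "finite (\<Union>D\<in>Pow slots. {m. dom m = D \<and> ran m \<subseteq> Qs})"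
    using finite_slots by (intro finite_UN_I finite_set_of_finite_maps) (auto intro: finite_subset)
  moreover have "{m. dom m \<subseteq> slots \<and> ran m \<subseteq> Qs} \<subseteq> (\<Union>D\<in>Pow slots. {m. dom m = D \<and> ran m \<subseteq> Qs})"
    by auto
  ultimately have "finite (T \<times> {m. dom m \<subseteq> slots \<and> ran m \<subseteq> Qs})"
    using finite_T by (auto intro: finite_subset)
  moreover have "{z. good_state z} \<subseteq> T \<times> {m. dom m \<subseteq> slots \<and> ran m \<subseteq> Qs}"
    using memory_invD(1,2) unfolding good_state_def Qs_def slots_def dom_def ran_def
    by (fastforce simp: mem_Times_iff)
  ultimately show ?thesis by (rule finite_subset[rotated])
qed

definition slot_index :: "'a ctl \<times> 's \<Rightarrow> nat" where
  "slot_index = (SOME g. bij_betw g slots {0..<card slots})"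

definition slot_at :: "nat \<Rightarrow> 'a ctl \<times> 's" where
  "slot_at = inv_into slots slot_index"

lemma slot_index_bij: "bij_betw slot_index slots {0..<card slots}"
  unfolding slot_index_def using ex_bij_betw_finite_nat[OF finite_slots] by (rule someI_ex)

lemma slot_at_index: "x \<in> slots \<Longrightarrow> slot_at (slot_index x) = x"
  unfolding slot_at_def using slot_index_bij by (simp add: bij_betw_inv_into_left)

definition chosen_slot :: "('a, 's) slot_memory \<Rightarrow> 'a ctl \<Rightarrow> nat \<Rightarrow> 's" where
  "chosen_slot m Ef t = (SOME r. \<exists>q. m (Ef, r) = Some q \<and> accepts_from Ef t (plan Ef (t, q)))"

lemma chosen_slot:
  "covered m Ef t \<Longrightarrow>
    \<exists>q. m (Ef, chosen_slot m Ef t) = Some q \<and> accepts_from Ef t (plan Ef (t, q))"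
  unfolding covered_def chosen_slot_def by (rule someI_ex)

definition slot_input :: "('a, 's) mstate \<Rightarrow> 'a ctl \<times> 's \<Rightarrow> 'a set" where
  "slot_input z x = (case snd z x of Some q \<Rightarrow> fst (choice (fst x) (fst z, q)) | None \<Rightarrow> {})"

text \<open>The output d_j is the input predicted by the slot with index j - 1.\<close>
definition label :: "('a, 's) mstate \<Rightarrow> 'a xout" where
  "label z = (out (fst z),
     \<lambda>Ef. if Ef \<in> Exs \<and> holds (fst z) Ef then Suc (slot_index (Ef, chosen_slot (snd z) Ef (fst z))) else 0,
     holds (fst z),
     \<lambda>j. slot_input z (slot_at (j - 1)))"

lemma label_ok:
  assumes "good_state z"
  shows "xout_ok Ins Outs (card slots) (label z)"
proof -
  have "v_of (label z) Ef \<le> card slots" for Ef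
  proof (cases "Ef \<in> Exs \<and> holds (fst z) Ef")
    case True
    with assms obtain q where "snd z (Ef, chosen_slot (snd z) Ef (fst z)) = Some q"
      using chosen_slot unfolding good_state_def by blast
    then have "(Ef, chosen_slot (snd z) Ef (fst z)) \<in> slots"
      using assms memory_invD(1) unfolding good_state_def by blast
    then show ?thesis using True bij_betw_apply[OF slot_index_bij] unfolding label_def by force
  qed (auto simp: label_def)
  moreover have "slot_input z x \<subseteq> Ins" for x
  proof (cases "snd z x")
    case (Some q)
    then have "(fst z, q) \<in> winning (fst x)" using assms memory_invD(3) unfolding good_state_def by blast
    then show ?thesis using Some choice_step(1) unfolding slot_input_def by simp
  qed (simp add: slot_input_def)
  ultimately show ?thesis using assms out_in unfolding xout_ok_iff good_state_def by (simp add: label_def)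
qed

definition run :: "(nat \<Rightarrow> 'a set) \<Rightarrow> nat \<Rightarrow> ('a, 's) mstate" where
  "run e i = foldl step start (map e [0..<i])"

lemma run_Suc: "run e (Suc i) = step (run e i) (e i)"
  by (simp add: run_def)

lemma fst_run: "fst (run e i) = reach tau t0 (map e [0..<i])"
  unfolding run_def reach_def by (induction i) (simp_all add: start_def step_def)

lemma good_run: "\<forall>j. e j \<subseteq> Ins \<Longrightarrow> good_state (run e i)"
  by (induction i) (simp_all add: run_Suc good_step, simp add: run_def good_start)

lemma slot_follows_plan:
  assumes e: "\<forall>j. e j \<subseteq> Ins" and q: "snd (run e n) x = Some q"
    and follows: "\<forall>l. e (l + n) = slot_input (run e (l + n)) x"
  shows "(\<lambda>l. e (l + n)) = plan (fst x) (fst (run e n), q)"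
proof -
  define V where "V l = (follow (fst x) ^^ l) (fst (run e n), q)" for l
  have winning: "V l \<in> winning (fst x)" for l
    unfolding V_def using memory_invD(3) good_run[OF e, of n] q
    unfolding good_state_def by (blast intro: follow_iter_winning)
  have track: "fst (run e (l + n)) = fst (V l) \<and> snd (run e (l + n)) x = Some (snd (V l))" for l
  proof (induction l)
    case 0
    then show ?case using q by (simp add: V_def)
  next
    case (Suc l)
    let ?z = "run e (l + n)"
    have input: "e (l + n) = fst (choice (fst x) (V l))"
      using follows[rule_format, of l] Suc.IH unfolding slot_input_def by simp
    have V_Suc: "V (Suc l) = follow (fst x) (V l)" unfolding V_def by simp
    have "advance (fst ?z) (snd ?z) (e (l + n)) x = Some (snd (V (Suc l)))"
      unfolding advance_Some using Suc.IH input V_Suc by (intro exI[of _ "snd (V l)"]) (simp add: follow_def)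
    moreover have "memory_inv (tau (fst ?z) (e (l + n))) (advance (fst ?z) (snd ?z) (e (l + n)))"
      using good_run[OF e] memory_inv_advance unfolding good_state_def by blast
    ultimately have "snd (run e (Suc l + n)) x = Some (snd (V (Suc l)))"
      using allocate_keeps by (simp add: run_Suc step_def)
    moreover have "fst (run e (Suc l + n)) = fst (V (Suc l))"
      using choice_step(2)[OF winning[of l]] Suc.IH input V_Suc by (simp add: run_Suc step_def)
    ultimately show ?case by simp
  qed
  show ?thesis
  proof
    fix l
    show "e (l + n) = plan (fst x) (fst (run e n), q) l"
      using follows track[of l] unfolding slot_input_def plan_def V_def by simp
  qed
qed

lemma E_constraint:
  assumes e: "\<forall>j. e j \<subseteq> Ins" and v: "v_of (label (run e n)) Ef = j" "j \<noteq> 0"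
    and d: "\<forall>l. e (l + n) = d_of (label (run e (l + n))) j"
  shows "csem Ins (tree t0) (body Ef) (map e [0..<n]) (\<lambda>l. e (l + n))"
proof -
  let ?t = "fst (run e n)" and ?m = "snd (run e n)"
  let ?x = "(Ef, chosen_slot ?m Ef ?t)"
  have Ef: "Ef \<in> Exs" "holds ?t Ef" and j: "j = Suc (slot_index ?x)"
    using v unfolding label_def by (auto split: if_splits)
  have good: "good_state (run e n)" by (rule good_run[OF e])
  then obtain q where q: "?m ?x = Some q" "accepts_from Ef ?t (plan Ef (?t, q))"
    using chosen_slot Ef unfolding good_state_def by blast
  have "slot_at (j - 1) = ?x"
    using j slot_at_index memory_invD(1) good q(1) unfolding good_state_def by auto
  then have "\<forall>l. e (l + n) = slot_input (run e (l + n)) ?x"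
    using d unfolding label_def by simp
  then have "(\<lambda>l. e (l + n)) = plan Ef (?t, q)" using slot_follows_plan[OF e q(1)] by simp
  then have "accepts_from Ef ?t (\<lambda>l. e (l + n))" using q(2) by simp
  then show ?thesis using accepts_from_iff_csem[OF Ef(1)] csem_tree fst_run by simp
qed

lemma complete_labels_run:
  "labels_along (complete_labels Ins (tree t0) (set (subfs Phi))) [] e (\<lambda>i. (label (run e i), e i))"
  unfolding labels_along_def complete_labels_def
proof (intro allI conjI impI)
  fix i
  let ?w = "map e [0..<i]"
  have holds: "holds (fst (run e i)) f \<longleftrightarrow> csem Ins (tree t0) f ([] @ ?w) (\<lambda>_. {})" for f
    unfolding holds_def fst_run using csem_tree by simp
  show "outs_of (fst (label (run e i), e i)) = tree t0 ([] @ ?w)"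
    by (simp add: label_def tree_def fst_run)
  show "v_of (fst (label (run e i), e i)) (E g) \<noteq> 0"
    if "E g \<in> set (subfs Phi)" and "csem Ins (tree t0) (E g) ([] @ ?w) (\<lambda>_. {})" for g
    using that holds unfolding label_def F_exist_def is_E_def by simp
  show "p_of (fst (label (run e i), e i)) (A g)"
    if "A g \<in> set (subfs Phi)" and "csem Ins (tree t0) (A g) ([] @ ?w) (\<lambda>_. {})" for g
    using that holds unfolding label_def by simp
qed simp

lemma run_satisfies_Phi_LTL:
  assumes e: "\<forall>j. e j \<subseteq> Ins"
  shows "lsem lprop_sem (Phi_LTL (card slots) Phi) (\<lambda>i. (label (run e i), e i))"
    (is "lsem _ _ ?c")
proof -
  note along = complete_labels_run[of e]
  have prime: "lsem lprop_sem (prime Phi) ?c"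
  proof (rule lsem_prime_if_csem[OF along subset_refl])
    show "csem Ins (tree t0) Phi [] e"
      using realises csem_state_formula[OF state_formula] unfolding tree_def by blast
  qed
  have exist: "lsem lprop_sem (prime (body Ef)) (\<lambda>i. ?c (i + n))"
    if Ef: "Ef \<in> Exs" and j: "j \<in> {1..card slots}" and v: "v_of (fst (?c n)) Ef = j"
      and d: "\<forall>l. snd (?c (l + n)) = d_of (fst (?c (l + n))) j" for Ef j n
  proof -
    have "v_of (label (run e n)) Ef = j" and "j \<noteq> 0"
      and "\<forall>l. e (l + n) = d_of (label (run e (l + n))) j"
      using v j d by simp_all
    then have "csem Ins (tree t0) (body Ef) (map e [0..<n]) (\<lambda>l. e (l + n))"
      by (rule E_constraint[OF e])
    moreover have "set (subfs (body Ef)) \<subseteq> set (subfs Phi)"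
      using Exs_E[OF Ef] subfs_trans[OF Exs_subfs[OF Ef]] by (metis subfs.simps(10) set_subset_Cons subset_trans)
    ultimately show ?thesis using lsem_prime_if_csem[OF labels_along_shift[OF along, of n]] by simp
  qed
  have univ: "lsem lprop_sem (prime (body Af)) (\<lambda>i. ?c (i + n))"
    if Af: "Af \<in> set (F_univ Phi)" and p: "p_of (fst (?c n)) Af" for Af n
  proof -
    obtain g where g: "Af = A g" "A g \<in> set (subfs Phi)" using Af unfolding F_univ_def is_A_def by auto
    have "csem Ins (tree (fst (run e n))) g [] (\<lambda>l. e (l + n))"
      using p e unfolding g(1) label_def holds_def by simp
    then have "csem Ins (tree t0) g (map e [0..<n]) (\<lambda>l. e (l + n))" using csem_tree fst_run by simp
    moreover have "set (subfs g) \<subseteq> set (subfs Phi)" using subfs_trans[OF g(2)] by auto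
    ultimately show ?thesis using lsem_prime_if_csem[OF labels_along_shift[OF along, of n]] g(1) by simp
  qed
  show ?thesis unfolding lsem_Phi_LTL using prime exist univ by blast
qed

theorem ltl_realisable: "ltl_realisable Ins Outs (card slots) (Phi_LTL (card slots) Phi)"
proof -
  have "start \<in> {z. good_state z}" and "\<forall>z\<in>{z. good_state z}. \<forall>e. e \<subseteq> Ins \<longrightarrow> step z e \<in> {z. good_state z}"
    and "\<forall>z\<in>{z. good_state z}. xout_ok Ins Outs (card slots) (label z)"
    using good_start good_step label_ok by auto
  then obtain T' t0' tau' out' where moore: "moore Ins (xout_ok Ins Outs (card slots)) T' t0' tau' out'"
    and comp: "\<And>e. \<forall>j. e j \<subseteq> Ins \<Longrightarrow> computation tau' t0' out' e = (\<lambda>i. (label (run e i), e i))"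
    unfolding run_def
    by (rule moore_of_finite_system[where ok = "xout_ok Ins Outs (card slots)" and lab = label,
          OF finite_good_states]) blast
  show ?thesis unfolding ltl_realisable_def
  proof (intro exI conjI allI impI)
    show "moore Ins (xout_ok Ins Outs (card slots)) T' t0' tau' out'" by (rule moore)
    fix e :: "nat \<Rightarrow> 'a set"
    assume "\<forall>j. e j \<subseteq> Ins"
    then show "lsem lprop_sem (Phi_LTL (card slots) Phi) (computation tau' t0' out' e)"
      using comp run_satisfies_Phi_LTL by simp
  qed
qed

end

section \<open>From an LTL realiser to a CTL* realiser\<close>

definition path_from :: "'a set list \<Rightarrow> (nat \<Rightarrow> 'a set) \<Rightarrow> nat \<Rightarrow> 'a set" where
  "path_from w e i = (if i < length w then w ! i else e (i - length w))"

lemma map_path_from: "map (path_from w e) [0..<i + length w] = w @ map e [0..<i]"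
proof -
  have "map (path_from w e) [0..<length w] = w"
    by (rule nth_equalityI) (simp_all add: path_from_def)
  then show ?thesis by (simp add: map_upt_add path_from_def)
qed

locale ltl_realiser =
  fixes Ins Outs :: "'a set" and Phi :: "'a ctl" and k :: nat
    and T :: "nat set" and t0 :: nat and tau :: "nat \<Rightarrow> 'a set \<Rightarrow> nat" and out :: "nat \<Rightarrow> 'a xout"
  assumes moore_system: "moore Ins (xout_ok Ins Outs k) T t0 tau out"
    and realises: "\<forall>e. (\<forall>j. e j \<subseteq> Ins) \<longrightarrow> lsem lprop_sem (Phi_LTL k Phi) (computation tau t0 out e)"
begin

lemma tau_closed: "t \<in> T \<Longrightarrow> e \<subseteq> Ins \<Longrightarrow> tau t e \<in> T"
  and t0_in: "t0 \<in> T" and out_ok: "t \<in> T \<Longrightarrow> xout_ok Ins Outs k (out t)"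
  using moore_system unfolding moore_def by auto

definition node_label :: "'a set list \<Rightarrow> 'a xout" where
  "node_label w = out (reach tau t0 w)"

definition tree :: "'a set list \<Rightarrow> 'a set" where
  "tree w = outs_of (node_label w)"

lemma node_label_ok: "\<forall>a\<in>set w. a \<subseteq> Ins \<Longrightarrow> xout_ok Ins Outs k (node_label w)"
  unfolding node_label_def by (intro out_ok reach_in_states[OF t0_in tau_closed])

lemma computation_from_node:
  "computation tau t0 out (path_from w e) (i + length w) = (node_label (w @ map e [0..<i]), e i)"
  unfolding computation_def node_label_def by (simp add: map_path_from path_from_def)

lemma realises_from_node:
  assumes "\<forall>a\<in>set w. a \<subseteq> Ins" and "\<forall>j. e j \<subseteq> Ins"
  shows "lsem lprop_sem (Phi_LTL k Phi) (computation tau t0 out (path_from w e))"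
  using realises assms unfolding path_from_def by (auto simp: nth_mem)

lemma sound_labels_from_node:
  assumes "\<And>w. \<forall>a\<in>set w. a \<subseteq> Ins \<Longrightarrow> sound_labels Ins tree Sub w (node_label w)"
    and "\<forall>a\<in>set w. a \<subseteq> Ins" and "\<forall>j. e j \<subseteq> Ins"
  shows "labels_along (sound_labels Ins tree Sub) w e
    (\<lambda>i. computation tau t0 out (path_from w e) (i + length w))"
proof -
  have "\<forall>a\<in>set (w @ map e [0..<i]). a \<subseteq> Ins" for i using assms(2,3) by auto
  then show ?thesis unfolding labels_along_def computation_from_node using assms(1) by simp
qed

lemma input_following_d:
  assumes "\<forall>a\<in>set w. a \<subseteq> Ins"
  shows "\<exists>e. (\<forall>i. e i \<subseteq> Ins) \<and> (\<forall>i. d_of (node_label (w @ map e [0..<i])) j = e i)"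
proof -
  define sq where "sq = rec_nat (reach tau t0 w) (\<lambda>_ t. tau t (d_of (out t) j))"
  define e where "e i = d_of (out (sq i)) j" for i
  have sq_in: "sq i \<in> T" for i
  proof (induction i)
    case 0
    then show ?case using reach_in_states[OF t0_in tau_closed assms] by (simp add: sq_def)
  next
    case (Suc i)
    then show ?case using tau_closed out_ok[of "sq i"] by (simp add: sq_def xout_ok_iff)
  qed
  have reach: "reach tau t0 (w @ map e [0..<i]) = sq i" for i
    by (induction i) (simp_all add: sq_def e_def reach_def)
  show ?thesis
  proof (intro exI conjI allI)
    show "e i \<subseteq> Ins" for i using out_ok[OF sq_in] unfolding e_def xout_ok_iff by blast
    show "d_of (node_label (w @ map e [0..<i])) j = e i" for i
      unfolding node_label_def reach by (simp add: e_def)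
  qed
qed

lemma A_sound:
  assumes IH: "\<And>w. \<forall>a\<in>set w. a \<subseteq> Ins \<Longrightarrow> sound_labels Ins tree (set (subfs g)) w (node_label w)"
    and Ag: "A g \<in> set (F_univ Phi)" and w: "\<forall>a\<in>set w. a \<subseteq> Ins" and p: "p_of (node_label w) (A g)"
  shows "csem Ins tree (A g) w (\<lambda>_. {})"
proof -
  have "csem Ins tree g w e" if e: "\<forall>j. e j \<subseteq> Ins" for e
  proof -
    let ?c = "computation tau t0 out (path_from w e)"
    have "\<forall>Af\<in>set (F_univ Phi). \<forall>n. p_of (fst (?c n)) Af \<longrightarrow>
        lsem lprop_sem (prime (body Af)) (\<lambda>i. ?c (i + n))"
      using realises_from_node[OF w e] unfolding lsem_Phi_LTL by blast
    moreover have "p_of (fst (?c (length w))) (A g)"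
      using p computation_from_node[of w e 0] by simp
    ultimately have "lsem lprop_sem (prime g) (\<lambda>i. ?c (i + length w))"
      using Ag by fastforce
    then show ?thesis using csem_if_lsem_prime[OF sound_labels_from_node[OF IH w e] subset_refl] by simp
  qed
  then show ?thesis by simp
qed

lemma E_sound:
  assumes IH: "\<And>w. \<forall>a\<in>set w. a \<subseteq> Ins \<Longrightarrow> sound_labels Ins tree (set (subfs g)) w (node_label w)"
    and Eg: "E g \<in> set (F_exist Phi)" and w: "\<forall>a\<in>set w. a \<subseteq> Ins" and v: "v_of (node_label w) (E g) \<noteq> 0"
  shows "csem Ins tree (E g) w (\<lambda>_. {})"
proof -
  define j where "j = v_of (node_label w) (E g)"
  have j: "j \<in> {1..k}" using v node_label_ok[OF w] unfolding j_def xout_ok_iff by auto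
  from input_following_d[OF w, of j] obtain e where e: "\<forall>i. e i \<subseteq> Ins"
    and follows: "\<forall>i. d_of (node_label (w @ map e [0..<i])) j = e i" by blast
  let ?c = "computation tau t0 out (path_from w e)"
  have "v_of (fst (?c (length w))) (E g) = j"
    using computation_from_node[of w e 0] by (simp add: j_def)
  moreover have "\<forall>l. snd (?c (l + length w)) = d_of (fst (?c (l + length w))) j"
    using follows computation_from_node[of w e] by simp
  moreover have "\<forall>Ef\<in>set (F_exist Phi). \<forall>j\<in>{1..k}. \<forall>n. v_of (fst (?c n)) Ef = j \<longrightarrow>
      (\<forall>l. snd (?c (l + n)) = d_of (fst (?c (l + n))) j) \<longrightarrow>
      lsem lprop_sem (prime (body Ef)) (\<lambda>i. ?c (i + n))"
    using realises_from_node[OF w e] unfolding lsem_Phi_LTL by blast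
  ultimately have "lsem lprop_sem (prime (body (E g))) (\<lambda>i. ?c (i + length w))"
    using Eg j by blast
  then have "csem Ins tree g w e"
    using csem_if_lsem_prime[OF sound_labels_from_node[OF IH w e] subset_refl] by simp
  then show ?thesis using e by auto
qed

lemma labels_sound:
  "set (subfs f) \<subseteq> set (subfs Phi) \<Longrightarrow> \<forall>a\<in>set w. a \<subseteq> Ins \<Longrightarrow>
    sound_labels Ins tree (set (subfs f)) w (node_label w)"
proof (induction f arbitrary: w)
  case (A g)
  have "A g \<in> set (F_univ Phi)" using A.prems(1) unfolding F_univ_def is_A_def by simp
  then show ?case using A A_sound[of g] unfolding sound_labels_def by auto
next
  case (E g)
  have "E g \<in> set (F_exist Phi)" using E.prems(1) unfolding F_exist_def is_E_def by simp
  then show ?case using E E_sound[of g] unfolding sound_labels_def by auto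
qed (auto simp: sound_labels_def tree_def)

theorem ctl_realisable: "ctl_realisable Ins Outs Phi"
proof -
  define e0 where "e0 = (\<lambda>_::nat. {} :: 'a set)"
  have "lsem lprop_sem (prime Phi) (\<lambda>i. computation tau t0 out (path_from [] e0) (i + length []))"
    using realises_from_node[of "[]" e0] unfolding lsem_Phi_LTL e0_def by simp
  moreover have "labels_along (sound_labels Ins tree (set (subfs Phi))) [] e0
      (\<lambda>i. computation tau t0 out (path_from [] e0) (i + length []))"
    using sound_labels_from_node[of "set (subfs Phi)" "[]" e0] labels_sound by (simp add: e0_def)
  ultimately have "csem Ins tree Phi [] e0" using csem_if_lsem_prime by blast
  moreover have "moore Ins (\<lambda>s. s \<subseteq> Outs) T t0 tau (\<lambda>t. outs_of (out t))"
    using moore_system unfolding moore_def xout_ok_iff by auto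
  ultimately show ?thesis
    unfolding ctl_realisable_def tree_def node_label_def e0_def by blast
qed

end

theorem mainTheorem5:
  fixes Ins Outs :: "'a set" and Phi :: "'a ctl" and aut :: "'a ctl \<Rightarrow> ('s, 'a ctl set) nba"
  assumes "finite Ins" and "finite Outs" and "Ins \<inter> Outs = {}"
    and "is_state Phi" and "over Ins Outs Phi"
    and "\<forall>Ef \<in> set (F_exist Phi). nba_for (aut Ef) (body Ef)"
    and "k = (\<Sum>Ef \<in> set (F_exist Phi). card (states (aut Ef)))"
  shows "ctl_realisable Ins Outs Phi \<longleftrightarrow> ltl_realisable Ins Outs k (Phi_LTL k Phi)"
proof
  assume "ctl_realisable Ins Outs Phi"
  then obtain T t0 tau out where "moore Ins (\<lambda>s. s \<subseteq> Outs) T t0 tau out"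
    and "csem Ins (\<lambda>w. out (reach tau t0 w)) Phi [] (\<lambda>_. {})"
    unfolding ctl_realisable_def by blast
  then interpret ctl_realiser Ins Outs Phi aut T t0 tau out
    using assms(4,6) by unfold_locales
  show "ltl_realisable Ins Outs k (Phi_LTL k Phi)"
    using ltl_realisable card_slots assms(7) by simp
next
  assume "ltl_realisable Ins Outs k (Phi_LTL k Phi)"
  then obtain T t0 tau out where "moore Ins (xout_ok Ins Outs k) T t0 tau out"
    and "\<forall>e. (\<forall>j. e j \<subseteq> Ins) \<longrightarrow> lsem lprop_sem (Phi_LTL k Phi) (computation tau t0 out e)"
    unfolding ltl_realisable_def by blast
  then interpret ltl_realiser Ins Outs Phi k T t0 tau out
    by unfold_locales
  show "ctl_realisable Ins Outs Phi" by (rule ctl_realisable)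
qed

end
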